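(* There is a constant $K_1>0$ such that for any finite $B,C\subset\mathbb Z^b\times\{0,1\}$, every $M\in\mathcal M^B_C$ and every $s\geq0$, $$|\!|\!| M|\!|\!|_s\leq K_1\max_{i\in\overline C}|\!|\!| M_{\{i\}}|\!|\!|_{s+b},$$ where $M_{\{i\}}$ is the submatrix of $M$ formed by the rows indexed by $\{(i,a)\in C\}$.
   Context: $d,\nu\geq1$, $b=\nu+d$. For $n\in\mathbb Z^b$, $|n|=\max_i|n_i|$, $\langle n\rangle=\max(|n|,1)$. For finite $B,C\subset\mathbb Z^b\times\{0,1\}$, $\mathcal M^B_C$ is the space of complex matrices $(M_k^{k'})_{k\in C,k'\in B}$; $\overline B,\overline C$ are the projections on $\mathbb Z^b$; $M_i^{i'}$ is the block with rows $\{(i,a)\in C\}$ and columns $\{(i',a')\in B\}$. A norm $|\cdot|$ is fixed on complex matrices of size at most $2\times2$ with $|UW|\leq|U||W|$ and $|U|\leq|W|$ if $U$ is a submatrix of $W$. For a matrix $M$ with row set $C'$ and column set $B'$, $[M(n)]:=\max_{i-i'=n,i\in\overline{C'},i'\in\overline{B'}}|M_i^{i'}|$ if $n\in\overline{C'}-\overline{B'}$, $0$ otherwise, and $|\!|\!| M|\!|\!|_s^2:=K_0\sum_n[M(n)]^2\langle n\rangle^{2s}$ with $K_0>0$ a fixed constant. *)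

theory Defs
  imports "HOL-Analysis.Analysis"
begin

text \<open>Indices in Z^b x {0,1}: pairs (i, a) with i :: int^'b (b = CARD('b)) and a :: nat,
  a restricted to {0,1} by explicit hypotheses.\<close>

type_synonym 'b idx = "(int ^ 'b) \<times> nat"

definition supn :: "int ^ 'b::finite \<Rightarrow> real" where
  "supn n = Max (range (\<lambda>k. real_of_int \<bar>n $ k\<bar>))"

definition jbr :: "int ^ 'b::finite \<Rightarrow> real" where
  "jbr n = max (supn n) 1"

text \<open>A block matrix of size at most 2x2 is given by a row index set R, a column index set S
  (both subsets of {0,1}) and its entries U a a' for a in R, a' in S.\<close>
definition block_norm :: "(nat set \<Rightarrow> nat set \<Rightarrow> (nat \<Rightarrow> nat \<Rightarrow> complex) \<Rightarrow> real) \<Rightarrow> bool" where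
  "block_norm nrm \<longleftrightarrow>
     (\<forall>R S U V. R \<subseteq> {0,1} \<and> S \<subseteq> {0,1} \<and> (\<forall>a\<in>R. \<forall>a'\<in>S. U a a' = V a a')
        \<longrightarrow> nrm R S U = nrm R S V) \<and>
     (\<forall>R S U. R \<subseteq> {0,1} \<and> S \<subseteq> {0,1} \<longrightarrow> nrm R S U \<ge> 0) \<and>
     (\<forall>R S U. R \<subseteq> {0,1} \<and> S \<subseteq> {0,1} \<longrightarrow>
        (nrm R S U = 0 \<longleftrightarrow> (\<forall>a\<in>R. \<forall>a'\<in>S. U a a' = 0))) \<and>
     (\<forall>R S U c. R \<subseteq> {0,1} \<and> S \<subseteq> {0,1} \<longrightarrow>
        nrm R S (\<lambda>a a'. c * U a a') = cmod c * nrm R S U) \<and>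
     (\<forall>R S U V. R \<subseteq> {0,1} \<and> S \<subseteq> {0,1} \<longrightarrow>
        nrm R S (\<lambda>a a'. U a a' + V a a') \<le> nrm R S U + nrm R S V) \<and>
     (\<forall>R S T U W. R \<subseteq> {0,1} \<and> S \<subseteq> {0,1} \<and> T \<subseteq> {0,1} \<longrightarrow>
        nrm R T (\<lambda>a c. \<Sum>a'\<in>S. U a a' * W a' c) \<le> nrm R S U * nrm S T W) \<and>
     (\<forall>R S R' S' U. R \<subseteq> {0,1} \<and> S \<subseteq> {0,1} \<and> R' \<subseteq> R \<and> S' \<subseteq> S \<longrightarrow>
        nrm R' S' U \<le> nrm R S U)"

definition sites :: "'b idx set \<Rightarrow> int ^ 'b \<Rightarrow> nat set" where
  "sites C i = {a. (i, a) \<in> C}"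

definition blk :: "('b idx \<Rightarrow> 'b idx \<Rightarrow> complex) \<Rightarrow> int ^ 'b \<Rightarrow> int ^ 'b \<Rightarrow> nat \<Rightarrow> nat \<Rightarrow> complex" where
  "blk M i i' = (\<lambda>a a'. M (i, a) (i', a'))"

definition diffs :: "'b idx set \<Rightarrow> 'b idx set \<Rightarrow> (int ^ 'b) set" where
  "diffs C B = {i - i' | i i'. i \<in> fst ` C \<and> i' \<in> fst ` B}"

definition brk :: "(nat set \<Rightarrow> nat set \<Rightarrow> (nat \<Rightarrow> nat \<Rightarrow> complex) \<Rightarrow> real) \<Rightarrow>
    ('b::finite) idx set \<Rightarrow> 'b idx set \<Rightarrow> ('b idx \<Rightarrow> 'b idx \<Rightarrow> complex) \<Rightarrow> int ^ 'b \<Rightarrow> real" where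
  "brk nrm C B M n =
     (if n \<in> diffs C B then
        Max {nrm (sites C i) (sites B i') (blk M i i') | i i'.
               i \<in> fst ` C \<and> i' \<in> fst ` B \<and> i - i' = n}
      else 0)"

text \<open>|||M|||_s; [M(n)] vanishes outside the finite set diffs C B, so the sum over Z^b
  is the finite sum over diffs C B.\<close>
definition tnorm :: "(nat set \<Rightarrow> nat set \<Rightarrow> (nat \<Rightarrow> nat \<Rightarrow> complex) \<Rightarrow> real) \<Rightarrow> real \<Rightarrow>
    ('b::finite) idx set \<Rightarrow> 'b idx set \<Rightarrow> ('b idx \<Rightarrow> 'b idx \<Rightarrow> complex) \<Rightarrow> real \<Rightarrow> real" where
  "tnorm nrm K0 C B M s =
     sqrt (K0 * (\<Sum>n\<in>diffs C B. (brk nrm C B M n)\<^sup>2 * (jbr n) powr (2 * s)))"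

end

theory Submission
  imports Defs
begin

text \<open>Each value [M(n)] is attained at a single row site i, and the same block enters
  |||M_{i}|||_{s+b}; so with T the largest row norm,
  [M(n)]^2 <n>^{2s} \<le> T^2/K0 \<cdot> <n>^{-2b}. Since <n>^{-2b} is dominated by the product
  of the one-dimensional weights <n_k>^{-2}, and the latter sum over Z to 1 + pi^2/3,
  summing over n gives the claim with K1 = (1 + pi^2/3)^{b/2}.\<close>

definition inv_bracket_sq :: "int \<Rightarrow> real" where
  "inv_bracket_sq m = 1 / (max (real_of_int \<bar>m\<bar>) 1)\<^sup>2"

lemma inv_bracket_sq_nonneg: "inv_bracket_sq m \<ge> 0"
  by (simp add: inv_bracket_sq_def)

lemma inv_bracket_sq_uminus: "inv_bracket_sq (- m) = inv_bracket_sq m"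
  by (simp add: inv_bracket_sq_def)

lemma sum_inv_bracket_sq_pos_le:
  assumes "finite A" "A \<subseteq> {0<..}"
  shows "(\<Sum>m\<in>A. inv_bracket_sq m) \<le> pi\<^sup>2 / 6"
proof -
  let ?f = "\<lambda>k::nat. 1 / real ((k + 1)\<^sup>2)"
  have "(\<Sum>m\<in>A. inv_bracket_sq m) = (\<Sum>m\<in>A. ?f (nat (m - 1)))"
    using assms(2) by (intro sum.cong) (auto simp: inv_bracket_sq_def of_nat_diff)
  also have "\<dots> = (\<Sum>k\<in>(\<lambda>m. nat (m - 1)) ` A. ?f k)"
  proof (rule sum.reindex[symmetric, unfolded comp_def])
    show "inj_on (\<lambda>m. nat (m - 1)) A"
    proof (rule inj_onI)
      fix x y assume "x \<in> A" "y \<in> A" "nat (x - 1) = nat (y - 1)"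
      with assms(2) show "x = y" by (auto simp: subset_eq eq_nat_nat_iff)
    qed
  qed
  also have "\<dots> \<le> (\<Sum>k. ?f k)"
    using assms(1) by (intro sum_le_suminf sums_summable[OF inverse_squares_sums]) auto
  also have "\<dots> = pi\<^sup>2 / 6"
    by (rule sums_unique[OF inverse_squares_sums, symmetric])
  finally show ?thesis .
qed

lemma sum_inv_bracket_sq_le:
  assumes "finite A"
  shows "(\<Sum>m\<in>A. inv_bracket_sq m) \<le> 1 + pi\<^sup>2 / 3"
proof -
  have split: "A = (A \<inter> {0}) \<union> (A \<inter> {0<..}) \<union> (A \<inter> {..<0})" by auto
  have "(\<Sum>m\<in>A \<inter> {0}. inv_bracket_sq m) \<le> 1"
    by (cases "0 \<in> A") (simp_all add: inv_bracket_sq_def)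
  moreover have "(\<Sum>m\<in>A \<inter> {0<..}. inv_bracket_sq m) \<le> pi\<^sup>2 / 6"
    using assms by (intro sum_inv_bracket_sq_pos_le) auto
  moreover have "(\<Sum>m\<in>A \<inter> {..<0}. inv_bracket_sq m) \<le> pi\<^sup>2 / 6"
  proof -
    have "(\<Sum>m\<in>A \<inter> {..<0}. inv_bracket_sq m) = (\<Sum>m\<in>uminus ` (A \<inter> {..<0}). inv_bracket_sq m)"
      by (subst sum.reindex) (auto simp: inv_bracket_sq_uminus)
    also have "\<dots> \<le> pi\<^sup>2 / 6"
      using assms by (intro sum_inv_bracket_sq_pos_le) auto
    finally show ?thesis .
  qed
  moreover have "(\<Sum>m\<in>A. inv_bracket_sq m) = (\<Sum>m\<in>A \<inter> {0}. inv_bracket_sq m)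
      + (\<Sum>m\<in>A \<inter> {0<..}. inv_bracket_sq m) + (\<Sum>m\<in>A \<inter> {..<0}. inv_bracket_sq m)"
    using assms by (subst split) (simp add: sum.union_disjoint disjoint_iff)
  ultimately show ?thesis by linarith
qed

lemma sum_prod_vec_nth_le:
  fixes w :: "'a \<Rightarrow> real" and F :: "('a ^ 'b::finite) set"
  assumes nonneg: "\<And>x. w x \<ge> 0"
    and bound: "\<And>A. finite A \<Longrightarrow> sum w A \<le> c"
    and "finite F"
  shows "(\<Sum>n\<in>F. \<Prod>k\<in>UNIV. w (n $ k)) \<le> c ^ CARD('b)"
proof -
  define A where "A = (\<Union>k. (\<lambda>n. n $ k) ` F)"
  have "finite A" using assms(3) unfolding A_def by auto
  have "F \<subseteq> vec_lambda ` (PiE UNIV (\<lambda>_. A))"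
    by (auto simp: A_def intro!: image_eqI[where x = "vec_nth _"])
  have "(\<Sum>n\<in>F. \<Prod>k\<in>UNIV. w (n $ k))
      \<le> (\<Sum>n\<in>vec_lambda ` (PiE (UNIV :: 'b set) (\<lambda>_. A)). \<Prod>k\<in>UNIV. w (n $ k))"
    by (rule sum_mono2) (use \<open>finite A\<close> \<open>F \<subseteq> _\<close> in \<open>auto intro: prod_nonneg nonneg simp: finite_PiE\<close>)
  also have "\<dots> = (\<Sum>f\<in>PiE (UNIV :: 'b set) (\<lambda>_. A). \<Prod>k\<in>UNIV. w (f k))"
    by (subst sum.reindex) (auto simp: inj_on_def vec_lambda_inverse)
  also have "\<dots> = (\<Prod>k\<in>(UNIV::'b set). sum w A)"
    using \<open>finite A\<close> by (subst prod_sum_PiE) auto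
  also have "\<dots> \<le> (\<Prod>k\<in>(UNIV::'b set). c)"
    using \<open>finite A\<close> by (intro prod_mono) (auto intro: sum_nonneg nonneg bound)
  finally show ?thesis by simp
qed

lemma jbr_ge_one: "jbr n \<ge> 1"
  by (simp add: jbr_def)

lemma jbr_ge_component: "max (real_of_int \<bar>n $ k\<bar>) 1 \<le> jbr n"
proof -
  have "real_of_int \<bar>n $ k\<bar> \<le> supn n"
    unfolding supn_def by (rule Max_ge) auto
  then show ?thesis unfolding jbr_def by auto
qed

lemma inverse_jbr_power_le_prod:
  "1 / jbr (n :: int ^ 'b::finite) ^ (2 * CARD('b)) \<le> (\<Prod>k\<in>UNIV. inv_bracket_sq (n $ k))"
proof -
  have "1 / jbr n ^ (2 * CARD('b)) = (\<Prod>k\<in>(UNIV::'b set). 1 / (jbr n)\<^sup>2)"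
    by (simp add: power_mult power_one_over)
  also have "\<dots> \<le> (\<Prod>k\<in>UNIV. inv_bracket_sq (n $ k))"
    unfolding inv_bracket_sq_def using jbr_ge_component[of n] jbr_ge_one[of n]
    by (intro prod_mono conjI divide_left_mono power_mono mult_pos_pos) (auto simp: zero_less_power)
  finally show ?thesis .
qed

lemma block_norm_nonneg:
  assumes "block_norm nrm" "R \<subseteq> {0,1}" "S \<subseteq> {0,1}"
  shows "nrm R S U \<ge> 0"
proof -
  have "\<forall>R S U. R \<subseteq> {0,1} \<and> S \<subseteq> {0,1} \<longrightarrow> nrm R S U \<ge> 0"
    using assms(1) unfolding block_norm_def by (elim conjE)
  then show ?thesis using assms(2,3) by blast
qed

lemma sites_subset: "C \<subseteq> UNIV \<times> {0,1} \<Longrightarrow> sites C i \<subseteq> {0,1}"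
  unfolding sites_def by auto

lemma finite_diffs: "finite C \<Longrightarrow> finite B \<Longrightarrow> finite (diffs C B)"
proof -
  assume "finite C" "finite B"
  moreover have "diffs C B = (\<lambda>(i, i'). i - i') ` (fst ` C \<times> fst ` B)"
    unfolding diffs_def by force
  ultimately show ?thesis by simp
qed

lemma finite_brk_values:
  assumes "finite C" "finite B"
  shows "finite {nrm (sites C i) (sites B i') (blk M i i') | i i'.
            i \<in> fst ` C \<and> i' \<in> fst ` B \<and> i - i' = n}"
proof (rule finite_subset)
  show "finite ((\<lambda>(i, i'). nrm (sites C i) (sites B i') (blk M i i')) ` (fst ` C \<times> fst ` B))"
    using assms by simp
qed force

lemma brk_attained:
  assumes "finite C" "finite B" "n \<in> diffs C B"
  obtains i i' where "i \<in> fst ` C" "i' \<in> fst ` B" "i - i' = n"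
    and "brk nrm C B M n = nrm (sites C i) (sites B i') (blk M i i')"
proof -
  let ?S = "{nrm (sites C i) (sites B i') (blk M i i') | i i'.
               i \<in> fst ` C \<and> i' \<in> fst ` B \<and> i - i' = n}"
  have "?S \<noteq> {}" using assms(3) unfolding diffs_def by blast
  with finite_brk_values[OF assms(1,2)] have "Max ?S \<in> ?S" by (rule Max_in)
  then show ?thesis using assms(3) that unfolding brk_def by auto
qed

lemma block_le_brk:
  assumes "finite C" "finite B" "i \<in> fst ` C" "i' \<in> fst ` B"
  shows "nrm (sites C i) (sites B i') (blk M i i') \<le> brk nrm C B M (i - i')"
proof -
  have "i - i' \<in> diffs C B" using assms(3,4) unfolding diffs_def by blast
  moreover have "nrm (sites C i) (sites B i') (blk M i i')
      \<le> Max {nrm (sites C j) (sites B j') (blk M j j') | j j'.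
               j \<in> fst ` C \<and> j' \<in> fst ` B \<and> j - j' = i - i'}"
    by (rule Max_ge[OF finite_brk_values[OF assms(1,2)]]) (use assms(3,4) in blast)
  ultimately show ?thesis unfolding brk_def by simp
qed

lemma brk_le_brk_row:
  assumes "block_norm nrm" "finite C" "finite B" "C \<subseteq> UNIV \<times> {0,1}" "B \<subseteq> UNIV \<times> {0,1}"
    and "n \<in> diffs C B"
  obtains i where "i \<in> fst ` C" "0 \<le> brk nrm C B M n"
    and "brk nrm C B M n \<le> brk nrm (C \<inter> ({i} \<times> UNIV)) B M n"
proof -
  obtain i i' where i: "i \<in> fst ` C" "i' \<in> fst ` B" "i - i' = n"
    and brk_eq: "brk nrm C B M n = nrm (sites C i) (sites B i') (blk M i i')"
    using brk_attained[OF assms(2,3,6)] .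
  let ?Ci = "C \<inter> ({i} \<times> UNIV)"
  have "sites ?Ci i = sites C i" unfolding sites_def by auto
  moreover have "i \<in> fst ` ?Ci" using i(1) by force
  ultimately have "brk nrm C B M n \<le> brk nrm ?Ci B M n"
    using block_le_brk[of ?Ci B i i' nrm M] assms(2,3) i brk_eq by simp
  moreover have "0 \<le> brk nrm C B M n"
    unfolding brk_eq using assms(1,4,5) by (intro block_norm_nonneg sites_subset)
  ultimately show ?thesis using that i(1) by blast
qed

lemma tnorm_nonneg: "K0 \<ge> 0 \<Longrightarrow> tnorm nrm K0 C B M s \<ge> 0"
  unfolding tnorm_def by (simp add: sum_nonneg)

lemma brk_term_le_tnorm:
  assumes "K0 > 0" "finite C" "finite B"
  shows "K0 * ((brk nrm C B M n)\<^sup>2 * jbr n powr (2 * s)) \<le> (tnorm nrm K0 C B M s)\<^sup>2"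
proof -
  define S where "S = (\<Sum>m\<in>diffs C B. (brk nrm C B M m)\<^sup>2 * jbr m powr (2 * s))"
  have "S \<ge> 0" unfolding S_def by (intro sum_nonneg) simp
  then have tnorm_sq: "(tnorm nrm K0 C B M s)\<^sup>2 = K0 * S"
    unfolding tnorm_def S_def[symmetric] using assms(1) by simp
  have "(brk nrm C B M n)\<^sup>2 * jbr n powr (2 * s) \<le> S"
  proof (cases "n \<in> diffs C B")
    case True
    then show ?thesis unfolding S_def using finite_diffs[OF assms(2,3)]
      by (intro member_le_sum) auto
  qed (use \<open>S \<ge> 0\<close> in \<open>simp add: brk_def\<close>)
  then show ?thesis unfolding tnorm_sq using assms(1) by simp
qed

lemma brk_term_le_rows:
  fixes B C :: "'b::finite idx set" and s :: real
  assumes "block_norm nrm" "K0 > 0" "finite C" "finite B"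
    and "C \<subseteq> UNIV \<times> {0,1}" "B \<subseteq> UNIV \<times> {0,1}"
    and rows: "\<And>i. i \<in> fst ` C \<Longrightarrow> tnorm nrm K0 (C \<inter> ({i} \<times> UNIV)) B M (s + CARD('b)) \<le> T"
    and "T \<ge> 0" "n \<in> diffs C B"
  shows "(brk nrm C B M n)\<^sup>2 * jbr n powr (2 * s)
    \<le> T\<^sup>2 / K0 * (\<Prod>k\<in>UNIV. inv_bracket_sq (n $ k))"
proof -
  obtain i where i: "i \<in> fst ` C" and brk: "0 \<le> brk nrm C B M n"
    "brk nrm C B M n \<le> brk nrm (C \<inter> ({i} \<times> UNIV)) B M n"
    using brk_le_brk_row[OF assms(1,3-6,9)] .
  let ?b = "CARD('b)" and ?Ci = "C \<inter> ({i} \<times> UNIV)"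
  have jbr_pos: "jbr n > 0" using jbr_ge_one[of n] by simp
  have split_powr: "jbr n powr (2 * (s + ?b)) = jbr n powr (2 * s) * jbr n ^ (2 * ?b)"
    using jbr_pos by (simp add: powr_add distrib_left powr_realpow[symmetric])
  have "(brk nrm C B M n)\<^sup>2 \<le> (brk nrm ?Ci B M n)\<^sup>2"
    using brk by (rule power_mono[rotated])
  then have "(brk nrm C B M n)\<^sup>2 * jbr n powr (2 * s) * jbr n ^ (2 * ?b)
      \<le> (brk nrm ?Ci B M n)\<^sup>2 * jbr n powr (2 * (s + ?b))"
    unfolding split_powr mult.assoc by (rule mult_right_mono) simp
  also have "\<dots> \<le> (tnorm nrm K0 ?Ci B M (s + ?b))\<^sup>2 / K0"
    using brk_term_le_tnorm[OF assms(2), of ?Ci B nrm M n "s + ?b"] assms(2-4)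
    by (simp add: pos_le_divide_eq mult.commute)
  also have "\<dots> \<le> T\<^sup>2 / K0"
    using rows[OF i] assms(2) tnorm_nonneg[of K0] by (intro divide_right_mono power_mono) auto
  finally have "(brk nrm C B M n)\<^sup>2 * jbr n powr (2 * s) \<le> T\<^sup>2 / K0 * (1 / jbr n ^ (2 * ?b))"
    using jbr_pos assms(2) by (simp add: pos_le_divide_eq mult_ac)
  also have "\<dots> \<le> T\<^sup>2 / K0 * (\<Prod>k\<in>UNIV. inv_bracket_sq (n $ k))"
    using assms(2) by (intro mult_left_mono inverse_jbr_power_le_prod) auto
  finally show ?thesis .
qed

lemma tnorm_le_rows:
  fixes B C :: "'b::finite idx set" and s :: real
  assumes "block_norm nrm" "K0 > 0" "finite C" "finite B"
    and "C \<subseteq> UNIV \<times> {0,1}" "B \<subseteq> UNIV \<times> {0,1}"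
    and "\<And>i. i \<in> fst ` C \<Longrightarrow> tnorm nrm K0 (C \<inter> ({i} \<times> UNIV)) B M (s + CARD('b)) \<le> T"
    and "T \<ge> 0"
  shows "tnorm nrm K0 C B M s \<le> sqrt ((1 + pi\<^sup>2 / 3) ^ CARD('b)) * T"
proof -
  let ?c = "1 + pi\<^sup>2 / 3"
  have "(\<Sum>n\<in>diffs C B. (brk nrm C B M n)\<^sup>2 * jbr n powr (2 * s))
      \<le> (\<Sum>n\<in>diffs C B. T\<^sup>2 / K0 * (\<Prod>k\<in>UNIV. inv_bracket_sq (n $ k)))"
    using assms by (intro sum_mono brk_term_le_rows) auto
  also have "\<dots> = T\<^sup>2 / K0 * (\<Sum>n\<in>diffs C B. \<Prod>k\<in>UNIV. inv_bracket_sq (n $ k))"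
    by (simp add: sum_distrib_left)
  also have "\<dots> \<le> T\<^sup>2 / K0 * ?c ^ CARD('b)"
    using assms(2-4) by (intro mult_left_mono sum_prod_vec_nth_le inv_bracket_sq_nonneg
        sum_inv_bracket_sq_le finite_diffs) auto
  finally have "K0 * (\<Sum>n\<in>diffs C B. (brk nrm C B M n)\<^sup>2 * jbr n powr (2 * s))
      \<le> T\<^sup>2 * ?c ^ CARD('b)"
    using assms(2) by (simp add: pos_le_divide_eq mult_ac)
  then have "tnorm nrm K0 C B M s \<le> sqrt (T\<^sup>2 * ?c ^ CARD('b))"
    unfolding tnorm_def by (rule real_sqrt_le_mono)
  also have "\<dots> = sqrt (?c ^ CARD('b)) * T"
    using assms(8) by (simp add: real_sqrt_mult)
  finally show ?thesis .
qed

theorem lemma3p7: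
  fixes nrm :: "nat set \<Rightarrow> nat set \<Rightarrow> (nat \<Rightarrow> nat \<Rightarrow> complex) \<Rightarrow> real"
    and K0 :: real
  assumes "CARD('b::finite) \<ge> 2"
    and "block_norm nrm"
    and "K0 > 0"
  shows "\<exists>K1 > 0. \<forall>(B :: 'b idx set) (C :: 'b idx set) (M :: 'b idx \<Rightarrow> 'b idx \<Rightarrow> complex) (s :: real).
           finite B \<and> finite C \<and> B \<subseteq> UNIV \<times> {0,1} \<and> C \<subseteq> UNIV \<times> {0,1} \<and> s \<ge> 0 \<longrightarrow>
           tnorm nrm K0 C B M s
             \<le> K1 * Max (insert 0 ((\<lambda>i. tnorm nrm K0 (C \<inter> ({i} \<times> UNIV)) B M (s + real CARD('b))) ` fst ` C))"
proof (intro exI[of _ "sqrt ((1 + pi\<^sup>2 / 3) ^ CARD('b))"] conjI allI impI)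
  show "sqrt ((1 + pi\<^sup>2 / 3) ^ CARD('b)) > 0"
    by (simp add: add_pos_nonneg)
  fix B C :: "'b idx set" and M and s :: real
  assume "finite B \<and> finite C \<and> B \<subseteq> UNIV \<times> {0,1} \<and> C \<subseteq> UNIV \<times> {0,1} \<and> s \<ge> 0"
  then have "finite B" "finite C" "B \<subseteq> UNIV \<times> {0,1}" "C \<subseteq> UNIV \<times> {0,1}" by auto
  let ?rows = "insert 0 ((\<lambda>i. tnorm nrm K0 (C \<inter> ({i} \<times> UNIV)) B M (s + real CARD('b))) ` fst ` C)"
  have "finite ?rows" using \<open>finite C\<close> by simp
  then show "tnorm nrm K0 C B M s \<le> sqrt ((1 + pi\<^sup>2 / 3) ^ CARD('b)) * Max ?rows"
    using assms(2,3) \<open>finite B\<close> \<open>finite C\<close> \<open>B \<subseteq> _\<close> \<open>C \<subseteq> _\<close>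
    by (intro tnorm_le_rows) (auto intro: Max_ge)
qed

end
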